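(* Let $D$ be a chain BN on $\{0,1\}^n$ with all conditional probabilities in $(0,1)$, and let $f(x)=\prod_{i\in T_1}x_i\prod_{j\in T_0}(1-x_j)$ where $T_0,T_1\subseteq[n]$ are disjoint and $T=T_0\cup T_1$ has $d\ge1$ elements. Let $S\subseteq[n]$ and write $0=t_0<t_1<\dots<t_d$ for the elements of $T\cup\{0\}$. If $\max S>t_d$ then $\hat f_S=0$. Otherwise, with $A_i,D'_{r,a},A'_{r,a}$ defined (relative to $S,T_0,T_1$) as in the context, and with $h_i=\min(S\cap(t_{i-1},t_i))$ if $S\cap(t_{i-1},t_i)\neq\emptyset$ and $h_i=t_i$ otherwise ($i=1,\dots,d$), $y_0=0$ and $y_i=1$ if $t_i\in T_1$, $y_i=0$ if $t_i\in T_0$, $$\hat f_S=\prod_{i=1}^d D'_{h_i+1,\,t_i}\;A'_{t_{i-1}+1,\,h_i}(y_{i-1}).$$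
   Context: A chain BN on $X_1,\dots,X_n$ is a Bayesian network with $\operatorname{pa}(1)=\emptyset$ and $\operatorname{pa}(i)=\{i-1\}$ for $2\le i\le n$. For $b\in\{0,1\}$ write $\mu_{i,b}=P(X_i=1\mid X_{i-1}=b)$ and $\sigma_{i,b}=\sqrt{\mu_{i,b}(1-\mu_{i,b})}$ for $i\ge2$, and set $\mu_{1,0}=\mu_{1,1}=P(X_1=1)$, $\sigma_{1,0}=\sigma_{1,1}=\sqrt{\mu_{1,0}(1-\mu_{1,0})}$. The BN-induced basis is $\phi_i(x)=(x_i-\mu_{i,x_{i-1}})/\sigma_{i,x_{i-1}}$ (for $i=1$, $(x_1-\mu_{1,0})/\sigma_{1,0}$), $\phi_S=\prod_{i\in S}\phi_i$, and $\hat f_S=\mathbb{E}_D[f(X)\phi_S(X)]$. Given $S,T_0,T_1$ with $T=T_0\cup T_1$, for $i\in[n]$ and $b\in\{0,1\}$ define $A_i(b)=\mu_{i,b}$ if $i\in T_1\setminus S$ or $i\notin S\cup T$; $A_i(b)=1-\mu_{i,b}$ if $i\in T_0\setminus S$; $A_i(b)=\sigma_{i,b}$ if $i\in S\cap T_1$ or $i\in S\setminus T$; $A_i(b)=-\sigma_{i,b}$ if $i\in S\cap T_0$. Let $D_i=A_i(1)-A_i(0)$. For integers $r,a$ let $D'_{r,a}=\prod_{\ell=r}^{a}D_\ell$ (equal to $1$ if $r>a$), $A'_{r,a}(0)=\sum_{\ell=r}^{a}D'_{\ell+1,a}A_\ell(0)$ (equal to $0$ if $r>a$), and $A'_{r,a}(1)=A'_{r,a}(0)+D'_{r,a}$.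 *)

theory Defs
  imports Complex_Main
begin

text \<open>Parameters: p1 = P(X_1 = 1) and mu i b = P(X_i = 1 | X_{i-1} = b) for i >= 2.
  Assignments are functions x :: nat => bool that are False outside {1..n};
  in particular x 0 = False, which is harmless since cmu 1 b ignores b.\<close>

definition cmu :: "real \<Rightarrow> (nat \<Rightarrow> bool \<Rightarrow> real) \<Rightarrow> nat \<Rightarrow> bool \<Rightarrow> real" where
  "cmu p1 mu i b = (if i = 1 then p1 else mu i b)"

definition csig :: "real \<Rightarrow> (nat \<Rightarrow> bool \<Rightarrow> real) \<Rightarrow> nat \<Rightarrow> bool \<Rightarrow> real" where
  "csig p1 mu i b = sqrt (cmu p1 mu i b * (1 - cmu p1 mu i b))"

definition cube :: "nat \<Rightarrow> (nat \<Rightarrow> bool) set" where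
  "cube n = {x. \<forall>i. x i \<longrightarrow> i \<in> {1..n}}"

definition chain_prob :: "nat \<Rightarrow> real \<Rightarrow> (nat \<Rightarrow> bool \<Rightarrow> real) \<Rightarrow> (nat \<Rightarrow> bool) \<Rightarrow> real" where
  "chain_prob n p1 mu x =
     (\<Prod>i\<in>{1..n}. if x i then cmu p1 mu i (x (i - 1)) else 1 - cmu p1 mu i (x (i - 1)))"

definition bn_phi :: "real \<Rightarrow> (nat \<Rightarrow> bool \<Rightarrow> real) \<Rightarrow> nat \<Rightarrow> (nat \<Rightarrow> bool) \<Rightarrow> real" where
  "bn_phi p1 mu i x = (of_bool (x i) - cmu p1 mu i (x (i - 1))) / csig p1 mu i (x (i - 1))"

definition fourier_coeff ::
  "nat \<Rightarrow> real \<Rightarrow> (nat \<Rightarrow> bool \<Rightarrow> real) \<Rightarrow> ((nat \<Rightarrow> bool) \<Rightarrow> real) \<Rightarrow> nat set \<Rightarrow> real" where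
  "fourier_coeff n p1 mu f S =
     (\<Sum>x\<in>cube n. chain_prob n p1 mu x * f x * (\<Prod>i\<in>S. bn_phi p1 mu i x))"

definition conj_fun :: "nat set \<Rightarrow> nat set \<Rightarrow> (nat \<Rightarrow> bool) \<Rightarrow> real" where
  "conj_fun T0 T1 x = (\<Prod>i\<in>T1. of_bool (x i)) * (\<Prod>j\<in>T0. 1 - of_bool (x j))"

definition Acoef :: "real \<Rightarrow> (nat \<Rightarrow> bool \<Rightarrow> real) \<Rightarrow> nat set \<Rightarrow> nat set \<Rightarrow> nat set \<Rightarrow> nat \<Rightarrow> bool \<Rightarrow> real" where
  "Acoef p1 mu S T0 T1 i b =
     (if i \<in> S then (if i \<in> T0 then - csig p1 mu i b else csig p1 mu i b)
      else (if i \<in> T0 then 1 - cmu p1 mu i b else cmu p1 mu i b))"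

definition Dcoef :: "real \<Rightarrow> (nat \<Rightarrow> bool \<Rightarrow> real) \<Rightarrow> nat set \<Rightarrow> nat set \<Rightarrow> nat set \<Rightarrow> nat \<Rightarrow> real" where
  "Dcoef p1 mu S T0 T1 i = Acoef p1 mu S T0 T1 i True - Acoef p1 mu S T0 T1 i False"

definition Dprime :: "real \<Rightarrow> (nat \<Rightarrow> bool \<Rightarrow> real) \<Rightarrow> nat set \<Rightarrow> nat set \<Rightarrow> nat set \<Rightarrow> nat \<Rightarrow> nat \<Rightarrow> real" where
  "Dprime p1 mu S T0 T1 r a = (\<Prod>l\<in>{r..a}. Dcoef p1 mu S T0 T1 l)"

definition Aprime :: "real \<Rightarrow> (nat \<Rightarrow> bool \<Rightarrow> real) \<Rightarrow> nat set \<Rightarrow> nat set \<Rightarrow> nat set \<Rightarrow> nat \<Rightarrow> nat \<Rightarrow> bool \<Rightarrow> real" where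
  "Aprime p1 mu S T0 T1 r a b =
     (\<Sum>l\<in>{r..a}. Dprime p1 mu S T0 T1 (l + 1) a * Acoef p1 mu S T0 T1 l False)
     + (if b then Dprime p1 mu S T0 T1 r a else 0)"

definition tseq :: "nat set \<Rightarrow> nat \<Rightarrow> nat" where
  "tseq T i = sorted_list_of_set (insert 0 T) ! i"

definition hseq :: "nat set \<Rightarrow> nat set \<Rightarrow> nat \<Rightarrow> nat" where
  "hseq S T i = (if S \<inter> {tseq T (i - 1)<..<tseq T i} \<noteq> {}
                 then Min (S \<inter> {tseq T (i - 1)<..<tseq T i}) else tseq T i)"

definition yseq :: "nat set \<Rightarrow> nat set \<Rightarrow> nat \<Rightarrow> bool" where
  "yseq T T1 i = (tseq T i \<in> T1)"

end

theory Submission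
  imports Defs
begin

text \<open>Every summand of the Fourier coefficient is a product of local factors
  \<open>weight i x\<^sub>i\<^sub>-\<^sub>1 x\<^sub>i\<close>, so the coefficient is a transfer-matrix product evaluated from left
  to right.  It suffices to track the total mass \<open>M m\<close> of the first \<open>m\<close> factors and the part
  \<open>M1 m\<close> of it with \<open>x\<^sub>m = 1\<close>.  A position outside \<open>T\<close> keeps \<open>M\<close> (or kills it, if it
  lies in \<open>S\<close>) and updates \<open>M1\<close> by the affine rule \<open>M1 i = M (i - 1) A\<^sub>i(0) + M1 (i - 1) D\<^sub>i\<close>;
  a position in \<open>T\<close> feeds \<open>M1\<close> into \<open>M\<close> by the same rule and then resets \<open>M1\<close> to \<open>M\<close> or \<open>0\<close>.
  Between consecutive elements of \<open>T\<close> the affine recurrence is solved in closed form, which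
  produces \<open>A'\<close> up to the first element \<open>h\<^sub>i\<close> of \<open>S\<close> and, once \<open>M\<close> has been killed there,
  the pure product \<open>D'\<close> from \<open>h\<^sub>i + 1\<close> to \<open>t\<^sub>i\<close>.\<close>

section \<open>Sums over the cube and chain sums\<close>

lemma cube_0: "cube 0 = {\<lambda>_. False}"
  by (auto simp: cube_def fun_eq_iff)

lemma cube_Suc: "cube (Suc m) = cube m \<union> (\<lambda>x. x(Suc m := True)) ` cube m"
proof
  show "cube (Suc m) \<subseteq> cube m \<union> (\<lambda>x. x(Suc m := True)) ` cube m"
  proof
    fix x assume x: "x \<in> cube (Suc m)"
    show "x \<in> cube m \<union> (\<lambda>x. x(Suc m := True)) ` cube m"
    proof (cases "x (Suc m)")
      case True
      have "x(Suc m := False) \<in> cube m" using x by (auto simp: cube_def le_Suc_eq)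
      moreover have "x = (x(Suc m := False))(Suc m := True)" using True by (simp add: fun_upd_idem)
      ultimately show ?thesis by blast
    next
      case False
      then have "x \<in> cube m" using x by (auto simp: cube_def le_Suc_eq)
      then show ?thesis by blast
    qed
  qed
qed (auto simp: cube_def split: if_splits)

lemma cube_Suc_False: "x \<in> cube m \<Longrightarrow> \<not> x (Suc m)"
  by (auto simp: cube_def)

lemma finite_cube: "finite (cube m)"
  by (induction m) (simp_all add: cube_0 cube_Suc)

lemma sum_cube_Suc:
  "(\<Sum>x\<in>cube (Suc m). H x) = (\<Sum>x\<in>cube m. H x + H (x(Suc m := True)))"
proof -
  have inj: "inj_on (\<lambda>x. x(Suc m := True)) (cube m)"
  proof (rule inj_onI)
    fix x y assume xy: "x \<in> cube m" "y \<in> cube m" and eq: "x(Suc m := True) = y(Suc m := True)"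
    show "x = y"
    proof
      fix i
      show "x i = y i"
        using fun_cong[OF eq, of i] cube_Suc_False[OF xy(1)] cube_Suc_False[OF xy(2)]
        by (cases "i = Suc m") auto
    qed
  qed
  have disj: "cube m \<inter> (\<lambda>x. x(Suc m := True)) ` cube m = {}"
    using cube_Suc_False by fastforce
  have "(\<Sum>x\<in>cube (Suc m). H x)
      = (\<Sum>x\<in>cube m. H x) + (\<Sum>x\<in>(\<lambda>x. x(Suc m := True)) ` cube m. H x)"
    unfolding cube_Suc by (rule sum.union_disjoint) (use finite_cube disj in auto)
  also have "(\<Sum>x\<in>(\<lambda>x. x(Suc m := True)) ` cube m. H x) = (\<Sum>x\<in>cube m. H (x(Suc m := True)))"
    by (rule sum.reindex[OF inj, unfolded comp_def])
  finally show ?thesis by (simp add: sum.distrib)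
qed

definition chain_sum :: "(nat \<Rightarrow> bool \<Rightarrow> bool \<Rightarrow> 'a::comm_ring_1) \<Rightarrow> nat \<Rightarrow> (bool \<Rightarrow> 'a) \<Rightarrow> 'a"
  where "chain_sum w m h = (\<Sum>x\<in>cube m. (\<Prod>i\<in>{1..m}. w i (x (i - 1)) (x i)) * h (x m))"

abbreviation chain_mass :: "(nat \<Rightarrow> bool \<Rightarrow> bool \<Rightarrow> 'a::comm_ring_1) \<Rightarrow> nat \<Rightarrow> 'a"
  where "chain_mass w m \<equiv> chain_sum w m (\<lambda>_. 1)"

abbreviation chain_mass1 :: "(nat \<Rightarrow> bool \<Rightarrow> bool \<Rightarrow> 'a::comm_ring_1) \<Rightarrow> nat \<Rightarrow> 'a"
  where "chain_mass1 w m \<equiv> chain_sum w m of_bool"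

lemma chain_sum_0: "chain_sum w 0 h = h False"
  by (simp add: chain_sum_def cube_0)

lemma chain_sum_Suc:
  "chain_sum w (Suc m) h = chain_sum w m (\<lambda>b. w (Suc m) b False * h False + w (Suc m) b True * h True)"
  unfolding chain_sum_def sum_cube_Suc
proof (rule sum.cong[OF refl])
  fix x assume x: "x \<in> cube m"
  have split: "(\<Prod>i\<in>{1..Suc m}. w i (y (i - 1)) (y i))
      = w (Suc m) (x m) (y (Suc m)) * (\<Prod>i\<in>{1..m}. w i (x (i - 1)) (x i))"
    if "\<And>i. i \<le> m \<Longrightarrow> y i = x i" for y
  proof -
    have "(\<Prod>i\<in>{1..m}. w i (y (i - 1)) (y i)) = (\<Prod>i\<in>{1..m}. w i (x (i - 1)) (x i))"
      using that by (intro prod.cong) auto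
    then show ?thesis by (simp add: prod.nat_ivl_Suc' that)
  qed
  have x_Suc: "x (Suc m) = False" using x by (simp add: cube_Suc_False)
  have prod_x: "(\<Prod>i\<in>{1..Suc m}. w i (x (i - 1)) (x i))
      = w (Suc m) (x m) (x (Suc m)) * (\<Prod>i\<in>{1..m}. w i (x (i - 1)) (x i))"
    by (rule split) (rule refl)
  have prod_x_True: "(\<Prod>i\<in>{1..Suc m}. w i ((x(Suc m := True)) (i - 1)) ((x(Suc m := True)) i))
      = w (Suc m) (x m) ((x(Suc m := True)) (Suc m)) * (\<Prod>i\<in>{1..m}. w i (x (i - 1)) (x i))"
    by (rule split) simp
  show "(\<Prod>i\<in>{1..Suc m}. w i (x (i - 1)) (x i)) * h (x (Suc m)) +
        (\<Prod>i\<in>{1..Suc m}. w i ((x(Suc m := True)) (i - 1)) ((x(Suc m := True)) i))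
          * h ((x(Suc m := True)) (Suc m)) =
        (\<Prod>i\<in>{1..m}. w i (x (i - 1)) (x i)) * (w (Suc m) (x m) False * h False + w (Suc m) (x m) True * h True)"
    unfolding prod_x prod_x_True fun_upd_same x_Suc by (simp add: algebra_simps)
qed

lemma chain_sum_linear: "chain_sum w m h = chain_mass w m * h False + chain_mass1 w m * (h True - h False)"
proof -
  have hb: "h b = h False + of_bool b * (h True - h False)" for b
    by (cases b) simp_all
  have "chain_sum w m h = (\<Sum>x\<in>cube m. (\<Prod>i\<in>{1..m}. w i (x (i - 1)) (x i))
      * (h False + of_bool (x m) * (h True - h False)))"
    unfolding chain_sum_def by (intro sum.cong refl arg_cong2[where f = "(*)"] hb)
  then show ?thesis
    by (simp add: chain_sum_def distrib_left sum.distrib sum_distrib_right mult.assoc)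
qed

lemma chain_mass_Suc:
  "chain_mass w (Suc m) = chain_mass w m * (w (Suc m) False False + w (Suc m) False True)
     + chain_mass1 w m * ((w (Suc m) True False + w (Suc m) True True)
                          - (w (Suc m) False False + w (Suc m) False True))"
  by (simp add: chain_sum_Suc chain_sum_linear[where h = "\<lambda>b. w (Suc m) b False + w (Suc m) b True"])

lemma chain_mass1_Suc:
  "chain_mass1 w (Suc m) = chain_mass w m * w (Suc m) False True
     + chain_mass1 w m * (w (Suc m) True True - w (Suc m) False True)"
  by (simp add: chain_sum_Suc chain_sum_linear[where h = "\<lambda>b. w (Suc m) b True"])

lemma linear_recurrence_closed_form:
  fixes v \<alpha> \<delta> :: "nat \<Rightarrow> 'a::comm_ring_1"
  assumes "q \<le> a"
    and "\<And>j. q < j \<Longrightarrow> j \<le> a \<Longrightarrow> v j = c * \<alpha> j + v (j - 1) * \<delta> j"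
  shows "v a = c * (\<Sum>l\<in>{q + 1..a}. (\<Prod>k\<in>{l + 1..a}. \<delta> k) * \<alpha> l) + v q * (\<Prod>k\<in>{q + 1..a}. \<delta> k)"
  using assms
proof (induction a rule: dec_induct)
  case (step a)
  have "(\<Sum>l\<in>{q + 1..Suc a}. (\<Prod>k\<in>{l + 1..Suc a}. \<delta> k) * \<alpha> l)
      = \<alpha> (Suc a) + (\<Sum>l\<in>{q + 1..a}. (\<Prod>k\<in>{l + 1..Suc a}. \<delta> k) * \<alpha> l)"
    using step.hyps by (simp add: sum.nat_ivl_Suc')
  also have "(\<Sum>l\<in>{q + 1..a}. (\<Prod>k\<in>{l + 1..Suc a}. \<delta> k) * \<alpha> l)
      = \<delta> (Suc a) * (\<Sum>l\<in>{q + 1..a}. (\<Prod>k\<in>{l + 1..a}. \<delta> k) * \<alpha> l)"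
    unfolding sum_distrib_left by (rule sum.cong) (auto simp: prod.nat_ivl_Suc')
  finally have sum_Suc: "(\<Sum>l\<in>{q + 1..Suc a}. (\<Prod>k\<in>{l + 1..Suc a}. \<delta> k) * \<alpha> l)
      = \<alpha> (Suc a) + \<delta> (Suc a) * (\<Sum>l\<in>{q + 1..a}. (\<Prod>k\<in>{l + 1..a}. \<delta> k) * \<alpha> l)" .
  have prod_Suc: "(\<Prod>k\<in>{q + 1..Suc a}. \<delta> k) = \<delta> (Suc a) * (\<Prod>k\<in>{q + 1..a}. \<delta> k)"
    using step.hyps by (simp add: prod.nat_ivl_Suc')
  have IH: "v a = c * (\<Sum>l\<in>{q + 1..a}. (\<Prod>k\<in>{l + 1..a}. \<delta> k) * \<alpha> l)
      + v q * (\<Prod>k\<in>{q + 1..a}. \<delta> k)"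
    by (rule step.IH, rule step.prems) simp_all
  have "v (Suc a) = c * \<alpha> (Suc a) + v a * \<delta> (Suc a)"
    using step.prems[of "Suc a"] step.hyps by simp
  then show ?case
    unfolding sum_Suc prod_Suc IH by (simp add: distrib_left distrib_right mult_ac)
qed simp

section \<open>The enumeration of \<open>T \<union> {0}\<close>\<close>

context
  fixes T :: "nat set"
  assumes finite_T: "finite T" and zero_notin_T: "0 \<notin> T"
begin

lemma tseq_strict_mono: "i < j \<Longrightarrow> j \<le> card T \<Longrightarrow> tseq T i < tseq T j"
  unfolding tseq_def using finite_T zero_notin_T
  by (intro sorted_wrt_nth_less[OF strict_sorted_list_of_set]) auto

lemma tseq_mono: "i \<le> j \<Longrightarrow> j \<le> card T \<Longrightarrow> tseq T i \<le> tseq T j"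
  using tseq_strict_mono[of i j] by (cases "i = j") auto

lemma tseq_mem: "i \<le> card T \<Longrightarrow> tseq T i \<in> insert 0 T"
  unfolding tseq_def using finite_T zero_notin_T
  by (metis finite_insert le_imp_less_Suc card_insert_disjoint distinct_card
      distinct_sorted_list_of_set nth_mem set_sorted_list_of_set)

lemma tseq_surj: "j \<in> insert 0 T \<Longrightarrow> \<exists>k \<le> card T. tseq T k = j"
proof -
  assume "j \<in> insert 0 T"
  then obtain k where "k < length (sorted_list_of_set (insert 0 T))"
    "sorted_list_of_set (insert 0 T) ! k = j"
    using finite_T by (metis finite_insert in_set_conv_nth set_sorted_list_of_set)
  then show ?thesis
    unfolding tseq_def using finite_T zero_notin_T by (intro exI[of _ k]) auto
qed

lemma tseq_0: "tseq T 0 = 0"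
proof -
  obtain k where "k \<le> card T" "tseq T k = 0" using tseq_surj[of 0] by auto
  then show ?thesis using tseq_mono[of 0 k] by simp
qed

lemma tseq_in_T: "0 < i \<Longrightarrow> i \<le> card T \<Longrightarrow> tseq T i \<in> T"
  using tseq_mem[of i] tseq_strict_mono[of 0 i] tseq_0 by auto

lemma tseq_gap: "0 < i \<Longrightarrow> i \<le> card T \<Longrightarrow> T \<inter> {tseq T (i - 1)<..<tseq T i} = {}"
proof (rule ccontr)
  assume i: "0 < i" "i \<le> card T" and "T \<inter> {tseq T (i - 1)<..<tseq T i} \<noteq> {}"
  then obtain j where j: "j \<in> T" "tseq T (i - 1) < j" "j < tseq T i" by auto
  then obtain k where k: "k \<le> card T" "tseq T k = j" using tseq_surj[of j] by auto
  show False
  proof (cases "k < i")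
    case True
    then have "tseq T k \<le> tseq T (i - 1)" using i by (intro tseq_mono) auto
    then show False using j k by simp
  next
    case False
    then have "tseq T i \<le> tseq T k" using k by (intro tseq_mono) auto
    then show False using j k by simp
  qed
qed

lemma le_tseq_card: "j \<in> T \<Longrightarrow> j \<le> tseq T (card T)"
  using tseq_surj[of j] tseq_mono by fastforce

end

lemma hseq_bounds:
  assumes "finite S" "tseq T (i - 1) < tseq T i"
  shows "tseq T (i - 1) < hseq S T i" and "hseq S T i \<le> tseq T i"
    and "S \<inter> {tseq T (i - 1)<..<hseq S T i} = {}"
    and "hseq S T i < tseq T i \<Longrightarrow> hseq S T i \<in> S"
proof -
  define X where "X = S \<inter> {tseq T (i - 1)<..<tseq T i}"
  have "finite X" using assms(1) by (simp add: X_def)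
  have "tseq T (i - 1) < hseq S T i \<and> hseq S T i \<le> tseq T i
      \<and> S \<inter> {tseq T (i - 1)<..<hseq S T i} = {} \<and> (hseq S T i < tseq T i \<longrightarrow> hseq S T i \<in> S)"
  proof (cases "X = {}")
    case True
    then show ?thesis using assms(2) by (simp add: hseq_def X_def)
  next
    case False
    then have h: "hseq S T i = Min X" by (simp add: hseq_def X_def)
    have min: "Min X \<in> X" using \<open>finite X\<close> False by (rule Min_in)
    moreover have "x \<notin> S" if "tseq T (i - 1) < x" "x < Min X" for x
    proof
      assume "x \<in> S"
      with that min have "x \<in> X" by (auto simp: X_def)
      then show False using Min_le[OF \<open>finite X\<close>] that(2) by fastforce
    qed
    ultimately show ?thesis unfolding h by (auto simp: X_def)
  qed
  then show "tseq T (i - 1) < hseq S T i" "hseq S T i \<le> tseq T i"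
    "S \<inter> {tseq T (i - 1)<..<hseq S T i} = {}" "hseq S T i < tseq T i \<Longrightarrow> hseq S T i \<in> S"
    by auto
qed

lemma Int_greaterThanAtMost_eq_empty_iff_Max:
  fixes S :: "'a::linorder set"
  assumes "finite S" "S \<subseteq> {..b}"
  shows "S \<inter> {a<..b} = {} \<longleftrightarrow> \<not> (S \<noteq> {} \<and> a < Max S)"
proof
  assume "S \<inter> {a<..b} = {}"
  moreover have "Max S \<in> S" if "S \<noteq> {}" using assms(1) that by (rule Max_in)
  ultimately show "\<not> (S \<noteq> {} \<and> a < Max S)" using assms(2) by fastforce
next
  assume "\<not> (S \<noteq> {} \<and> a < Max S)"
  then show "S \<inter> {a<..b} = {}" using Max_ge[OF assms(1)] by fastforce
qed

section \<open>The transfer recursion for a conjunction on a chain network\<close>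

locale chain_conj_coeff =
  fixes n :: nat and p1 :: real and mu :: "nat \<Rightarrow> bool \<Rightarrow> real" and S T0 T1 :: "nat set"
  assumes cmu_bounds: "\<And>i b. i \<in> {1..n} \<Longrightarrow> 0 \<le> cmu p1 mu i b \<and> cmu p1 mu i b \<le> 1"
    and T0: "T0 \<subseteq> {1..n}" and T1: "T1 \<subseteq> {1..n}" and disj: "T0 \<inter> T1 = {}"
    and S: "S \<subseteq> {1..n}"
begin

abbreviation "cm \<equiv> cmu p1 mu"
abbreviation "cs \<equiv> csig p1 mu"
abbreviation "Ac \<equiv> Acoef p1 mu S T0 T1"
abbreviation "Dc \<equiv> Dcoef p1 mu S T0 T1"
abbreviation "Dp \<equiv> Dprime p1 mu S T0 T1"
abbreviation "Ap \<equiv> Aprime p1 mu S T0 T1"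
abbreviation "T \<equiv> T0 \<union> T1"

definition weight :: "nat \<Rightarrow> bool \<Rightarrow> bool \<Rightarrow> real" where
  "weight i b c = (if c then cm i b else 1 - cm i b)
     * (if i \<in> T1 then of_bool c else 1) * (if i \<in> T0 then 1 - of_bool c else 1)
     * (if i \<in> S then (of_bool c - cm i b) / cs i b else 1)"

abbreviation "M \<equiv> chain_mass weight"
abbreviation "M1 \<equiv> chain_mass1 weight"

lemma fourier_coeff_eq_mass: "fourier_coeff n p1 mu (conj_fun T0 T1) S = M n"
proof -
  have restrict: "(\<Prod>i\<in>A. f i) = (\<Prod>i\<in>{1..n}. if i \<in> A then f i else 1)"
    if "A \<subseteq> {1..n}" for A and f :: "nat \<Rightarrow> real"
    using that by (simp add: prod.If_cases Int_absorb1)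
  show ?thesis
    unfolding fourier_coeff_def chain_sum_def
  proof (rule sum.cong[OF refl])
    fix x
    show "chain_prob n p1 mu x * conj_fun T0 T1 x * (\<Prod>i\<in>S. bn_phi p1 mu i x)
        = (\<Prod>i\<in>{1..n}. weight i (x (i - 1)) (x i)) * 1"
      unfolding conj_fun_def bn_phi_def chain_prob_def weight_def
        restrict[OF T1] restrict[OF T0] restrict[OF S]
      by (simp add: prod.distrib mult_ac)
  qed
qed

lemma weight_True:
  "i \<in> {1..n} \<Longrightarrow> weight i b True = (if i \<in> T0 then 0 else Ac i b)"
  and weight_False:
  "i \<in> {1..n} \<Longrightarrow> weight i b False =
     (if i \<in> T1 then 0 else if i \<in> T0 then Ac i b else of_bool (i \<notin> S) - Ac i b)"
proof -
  assume i: "i \<in> {1..n}"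
  define c where "c = cm i b"
  have "0 \<le> c * (1 - c)" using cmu_bounds[OF i, of b] by (simp add: c_def)
  then have "c * (1 - c) / sqrt (c * (1 - c)) = sqrt (c * (1 - c))"
    by (rule real_div_sqrt)
  then have sig1: "c * (1 - c) / cs i b = cs i b"
    by (simp add: csig_def c_def)
  have "(1 - c) * (0 - c) = - (c * (1 - c))"
    by (simp add: algebra_simps)
  then have "(1 - c) * (0 - c) / cs i b = - cs i b"
    by (simp only: minus_divide_left[symmetric] sig1)
  note sig = sig1 this
  show "weight i b True = (if i \<in> T0 then 0 else Ac i b)"
    using sig disj by (auto simp: weight_def Acoef_def c_def)
  show "weight i b False =
     (if i \<in> T1 then 0 else if i \<in> T0 then Ac i b else of_bool (i \<notin> S) - Ac i b)"
    using sig disj by (auto simp: weight_def Acoef_def c_def)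
qed

lemma mass_step_nonT:
  assumes i: "i \<in> {1..n}" "i \<notin> T"
  shows "M i = (if i \<in> S then 0 else M (i - 1))"
    and "M1 i = M (i - 1) * Ac i False + M1 (i - 1) * Dc i"
proof -
  obtain m where m: "i = Suc m" using i by (cases i) auto
  show "M i = (if i \<in> S then 0 else M (i - 1))"
    using chain_mass_Suc[of weight m] weight_True[OF i(1)] weight_False[OF i(1)] i
    unfolding m by simp
  show "M1 i = M (i - 1) * Ac i False + M1 (i - 1) * Dc i"
    using chain_mass1_Suc[of weight m] weight_True[OF i(1)] weight_False[OF i(1)] i
    unfolding m by (simp add: Dcoef_def)
qed

lemma mass_step_T:
  assumes i: "i \<in> {1..n}" "i \<in> T"
  shows "M i = M (i - 1) * Ac i False + M1 (i - 1) * Dc i"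
    and "M1 i = (if i \<in> T1 then M i else 0)"
proof -
  obtain m where m: "i = Suc m" using i by (cases i) auto
  have w: "weight i b True = (if i \<in> T1 then Ac i b else 0)"
    "weight i b False = (if i \<in> T1 then 0 else Ac i b)" for b
    using weight_True[OF i(1)] weight_False[OF i(1)] i disj by auto
  show mass: "M i = M (i - 1) * Ac i False + M1 (i - 1) * Dc i"
    using chain_mass_Suc[of weight m] unfolding m by (simp add: w[unfolded m] Dcoef_def)
  show "M1 i = (if i \<in> T1 then M i else 0)"
    using chain_mass1_Suc[of weight m] mass unfolding m by (simp add: w[unfolded m] Dcoef_def)
qed

lemma mass_segment:
  assumes "a \<le> b" "b \<le> n" "T \<inter> {a<..b} = {}"
  shows "M b = (if S \<inter> {a<..b} = {} then M a else 0)"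
  using assms
proof (induction b)
  case (Suc b)
  show ?case
  proof (cases "a = Suc b")
    case False
    then have "a \<le> b" "{a<..Suc b} = insert (Suc b) {a<..b}"
      using Suc.prems(1) by auto
    then show ?thesis
      using Suc mass_step_nonT(1)[of "Suc b"] by auto
  qed simp
qed simp

lemma mass1_linear_recurrence:
  assumes "q \<le> a"
    and "\<And>j. q < j \<Longrightarrow> j \<le> a \<Longrightarrow> v j = c * Ac j False + v (j - 1) * Dc j"
  shows "v a = c * Ap (q + 1) a False + v q * Dp (q + 1) a"
  using linear_recurrence_closed_form[of q a v c "\<lambda>j. Ac j False" Dc] assms
  by (simp add: Aprime_def Dprime_def)

lemma mass_block:
  assumes tp: "tp < t" and t: "t \<le> n" "t \<in> T" and gap: "T \<inter> {tp<..<t} = {}"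
    and h: "tp < h" "h \<le> t" "S \<inter> {tp<..<h} = {}" "h < t \<Longrightarrow> h \<in> S"
    and M1_tp: "M1 tp = (if y then M tp else 0)"
  shows "M t = M tp * (Dp (h + 1) t * Ap (tp + 1) h y)"
proof -
  txt \<open>At \<open>t\<close> the mass \<open>M\<close> obeys the same affine rule as \<open>M1\<close> does before \<open>t\<close>, so along
    \<open>v\<close> the block is a single recurrence with constant term \<open>M tp\<close> up to \<open>h\<close> and \<open>0\<close> after it.\<close>
  define v where "v j = (if j = t then M t else M1 j)" for j
  have M_before: "M (j - 1) = (if j \<le> h then M tp else 0)" if "tp < j" "j \<le> t" for j
  proof -
    have "{tp<..j - 1} \<subseteq> {tp<..<t}" using that by auto
    then have "T \<inter> {tp<..j - 1} = {}" using gap by blast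
    then have "M (j - 1) = (if S \<inter> {tp<..j - 1} = {} then M tp else 0)"
      using that t by (intro mass_segment) auto
    moreover have "S \<inter> {tp<..j - 1} = {} \<longleftrightarrow> j \<le> h"
    proof
      show "j \<le> h" if empty: "S \<inter> {tp<..j - 1} = {}"
      proof (rule ccontr)
        assume "\<not> j \<le> h"
        then have "h < t" "h \<in> {tp<..j - 1}" using h(1) \<open>j \<le> t\<close> by auto
        then show False using h(4) empty by blast
      qed
      show "S \<inter> {tp<..j - 1} = {}" if "j \<le> h"
      proof -
        have "{tp<..j - 1} \<subseteq> {tp<..<h}" using that \<open>tp < j\<close> by auto
        then show ?thesis using h(3) by blast
      qed
    qed
    ultimately show ?thesis by simp
  qed
  have v_step: "v j = M (j - 1) * Ac j False + v (j - 1) * Dc j" if "tp < j" "j \<le> t" for j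
  proof -
    have "j - 1 \<noteq> t" using that by linarith
    then have v_prev: "v (j - 1) = M1 (j - 1)" by (simp add: v_def)
    show ?thesis
    proof (cases "j = t")
      case True
      then have "v j = M t" by (simp add: v_def)
      then show ?thesis unfolding v_prev using mass_step_T(1)[of t] tp t True by simp
    next
      case False
      then have "v j = M1 j" "j \<notin> T" using that gap by (auto simp: v_def)
      then show ?thesis unfolding v_prev using mass_step_nonT(2)[of j] that t by simp
    qed
  qed
  have "v h = M tp * Ap (tp + 1) h False + v tp * Dp (tp + 1) h"
  proof (rule mass1_linear_recurrence)
    show "v j = M tp * Ac j False + v (j - 1) * Dc j" if "tp < j" "j \<le> h" for j
      using v_step[of j] M_before[of j] that h(2) by simp
  qed (use h in auto)
  moreover have "v tp = M1 tp" using tp by (simp add: v_def)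
  moreover have "Ap (tp + 1) h y = Ap (tp + 1) h False + (if y then Dp (tp + 1) h else 0)"
    by (simp add: Aprime_def)
  ultimately have v_h: "v h = M tp * Ap (tp + 1) h y"
    using M1_tp by (simp add: algebra_simps)
  have "v t = 0 * Ap (h + 1) t False + v h * Dp (h + 1) t"
  proof (rule mass1_linear_recurrence)
    show "v j = 0 * Ac j False + v (j - 1) * Dc j" if "h < j" "j \<le> t" for j
      using v_step[of j] M_before[of j] that h(1) by simp
  qed (use h in auto)
  then show ?thesis using v_h by (simp add: v_def)
qed

abbreviation block_factor :: "nat \<Rightarrow> real" where
  "block_factor i \<equiv> Dp (hseq S T i + 1) (tseq T i)
     * Ap (tseq T (i - 1) + 1) (hseq S T i) (yseq T T1 (i - 1))"

lemma finite_T: "finite T" and zero_notin_T: "0 \<notin> T"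
  using T0 T1 finite_subset by auto

lemma mass_tseq:
  "k \<le> card T \<Longrightarrow> M (tseq T k) = (\<Prod>i\<in>{1..k}. block_factor i)
     \<and> M1 (tseq T k) = (if yseq T T1 k then M (tseq T k) else 0)"
proof (induction k)
  case 0
  have "0 \<notin> T1" using T1 by auto
  then show ?case by (simp add: tseq_0[OF finite_T zero_notin_T] chain_sum_0 yseq_def)
next
  case (Suc k)
  define tp t h where "tp = tseq T k" and "t = tseq T (Suc k)" and "h = hseq S T (Suc k)"
  have tp_t: "tp < t" unfolding tp_def t_def
    using Suc.prems by (intro tseq_strict_mono[OF finite_T zero_notin_T]) auto
  have t_T: "t \<in> T" unfolding t_def
    using Suc.prems by (intro tseq_in_T[OF finite_T zero_notin_T]) auto
  then have "t \<le> n" using T0 T1 by auto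
  have gap: "T \<inter> {tp<..<t} = {}"
    using tseq_gap[OF finite_T zero_notin_T, of "Suc k"] Suc.prems by (simp add: tp_def t_def)
  have "finite S" using S finite_subset by auto
  then have h: "tp < h" "h \<le> t" "S \<inter> {tp<..<h} = {}" "h < t \<Longrightarrow> h \<in> S"
    using hseq_bounds[of S T "Suc k"] tp_t by (auto simp: tp_def t_def h_def)
  have IH: "M tp = (\<Prod>i\<in>{1..k}. block_factor i)" "M1 tp = (if yseq T T1 k then M tp else 0)"
    using Suc by (simp_all add: tp_def)
  have "M t = M tp * (Dp (h + 1) t * Ap (tp + 1) h (yseq T T1 k))"
    by (rule mass_block[OF tp_t \<open>t \<le> n\<close> t_T gap h IH(2)])
  then have "M t = M tp * block_factor (Suc k)"
    by (simp add: tp_def t_def h_def)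
  moreover have "M1 t = (if yseq T T1 (Suc k) then M t else 0)"
    using mass_step_T(2)[of t] t_T \<open>t \<le> n\<close> tp_t by (simp add: yseq_def t_def)
  ultimately show ?case
    using IH(1) by (simp add: prod.nat_ivl_Suc' mult.commute t_def)
qed

end

theorem mainTheorem5:
  fixes n :: nat and p1 :: real and mu :: "nat \<Rightarrow> bool \<Rightarrow> real"
    and S T0 T1 :: "nat set"
  assumes p1: "0 < p1" "p1 < 1"
    and mu: "\<And>i b. i \<in> {2..n} \<Longrightarrow> 0 < mu i b \<and> mu i b < 1"
    and T0: "T0 \<subseteq> {1..n}" and T1: "T1 \<subseteq> {1..n}" and disj: "T0 \<inter> T1 = {}"
    and d: "card (T0 \<union> T1) \<ge> 1"
    and S: "S \<subseteq> {1..n}"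
  shows "(S \<noteq> {} \<and> Max S > tseq (T0 \<union> T1) (card (T0 \<union> T1))
            \<longrightarrow> fourier_coeff n p1 mu (conj_fun T0 T1) S = 0)
       \<and> (\<not> (S \<noteq> {} \<and> Max S > tseq (T0 \<union> T1) (card (T0 \<union> T1)))
            \<longrightarrow> fourier_coeff n p1 mu (conj_fun T0 T1) S =
               (\<Prod>i\<in>{1..card (T0 \<union> T1)}.
                  Dprime p1 mu S T0 T1 (hseq S (T0 \<union> T1) i + 1) (tseq (T0 \<union> T1) i)
                  * Aprime p1 mu S T0 T1 (tseq (T0 \<union> T1) (i - 1) + 1) (hseq S (T0 \<union> T1) i)
                      (yseq (T0 \<union> T1) T1 (i - 1))))"
proof -
  interpret chain_conj_coeff n p1 mu S T0 T1
  proof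
    show "0 \<le> cmu p1 mu i b \<and> cmu p1 mu i b \<le> 1" if "i \<in> {1..n}" for i b
      using p1 mu[of i b] that by (cases "i = 1") (auto simp: cmu_def less_imp_le)
  qed (fact T0 T1 disj S)+
  define td where "td = tseq T (card T)"
  have "td \<le> n"
    using tseq_mem[OF finite_T zero_notin_T, of "card T"] T0 T1 by (auto simp: td_def)
  moreover have "T \<inter> {td<..n} = {}"
    using le_tseq_card[OF finite_T zero_notin_T] by (fastforce simp: td_def)
  ultimately have tail: "M n = (if S \<inter> {td<..n} = {} then M td else 0)"
    by (intro mass_segment) auto
  have "finite S" using S finite_subset by auto
  with S have "S \<inter> {td<..n} = {} \<longleftrightarrow> \<not> (S \<noteq> {} \<and> Max S > td)"
    by (intro Int_greaterThanAtMost_eq_empty_iff_Max) auto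
  then show ?thesis
    using fourier_coeff_eq_mass tail mass_tseq[of "card T"] by (simp add: td_def)
qed

end
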